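(* For all integers $n\ge 2$ and $d$, the $(n-1)\times(n-1)$ matrix $B(n,d)=\bigl(b_{n,d}(i,j)\bigr)_{i,j=1}^{n-1}$ is Toeplitz, i.e. $b_{n,d}(i+1,j+1)=b_{n,d}(i,j)$ for all $i,j\in[n-2]$.
   Context: For a permutation $\pi=\pi_1\cdots\pi_n$ of $[n]$ (one-line notation) or any word of distinct integers, an ascent is a position $t$ with $\pi_t<\pi_{t+1}$ and a descent one with $\pi_t>\pi_{t+1}$; $\operatorname{des}(\pi)$ is the number of descents and the height $h$ of a word is its number of ascents minus its number of descents. $\pi$ is a ballot permutation if every prefix $\pi_1\cdots\pi_t$ ($t\in[n]$) has nonnegative height. $\mathscr{B}_{n,d}$ is the set of ballot permutations of $[n]$ with exactly $d$ descents, and $b_{n,d}(i,j)$ is the number of $\pi\in\mathscr{B}_{n,d}$ that contain $i\,n\,j$ as a factor (consecutive letters $\pi_t=i,\pi_{t+1}=n,\pi_{t+2}=j$ for some $t$). *)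

theory Defs
  imports Main
begin

(* Words of distinct integers are represented as lists of naturals (permutations of [n] = {1..n}).
   Positions are 0-based in Isabelle lists. *)

definition ascents :: "nat list \<Rightarrow> nat" where
  "ascents w = card {t. Suc t < length w \<and> w ! t < w ! Suc t}"

definition descents :: "nat list \<Rightarrow> nat" where
  "descents w = card {t. Suc t < length w \<and> w ! t > w ! Suc t}"

definition height :: "nat list \<Rightarrow> int" where
  "height w = int (ascents w) - int (descents w)"

definition is_perm :: "nat \<Rightarrow> nat list \<Rightarrow> bool" where
  "is_perm n w \<longleftrightarrow> distinct w \<and> set w = {1..n}"

definition ballot :: "nat list \<Rightarrow> bool" where
  "ballot w \<longleftrightarrow> (\<forall>t\<in>{1..length w}. height (take t w) \<ge> 0)"

definition ballot_perms :: "nat \<Rightarrow> int \<Rightarrow> nat list set" where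
  "ballot_perms n d = {w. is_perm n w \<and> ballot w \<and> int (descents w) = d}"

definition has_factor3 :: "nat list \<Rightarrow> nat \<Rightarrow> nat \<Rightarrow> nat \<Rightarrow> bool" where
  "has_factor3 w a b c \<longleftrightarrow>
     (\<exists>t. Suc (Suc t) < length w \<and> w ! t = a \<and> w ! Suc t = b \<and> w ! Suc (Suc t) = c)"

definition b_count :: "nat \<Rightarrow> int \<Rightarrow> nat \<Rightarrow> nat \<Rightarrow> nat" where
  "b_count n d i j = card {w \<in> ballot_perms n d. has_factor3 w i n j}"

end

theory Submission
  imports Defs "HOL-Library.Sublist"
begin

text \<open>
  Both numbers count the pairs \<open>(x, y)\<close> of words with \<open>x @ y\<close> a permutation of
  \<open>{2..n}\<close> such that \<open>x @ (n + 1) # y\<close> is a ballot word with \<open>d\<close> descents and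
  \<open>i + 1, n, j + 1\<close> is a factor of \<open>x\<close> or of \<open>y\<close>.

  In a permutation containing the factor \<open>i n j\<close>, the letter \<open>n - 1\<close> is not adjacent to
  \<open>n\<close>, so it is a peak; deleting it and raising the letters below it by one gives such a pair,
  and every pair arises in exactly one way.

  Each pair also gives, bijectively, a permutation containing \<open>(i + 1) n (j + 1)\<close>, by
  inserting the new minimum \<open>1\<close>: in place of the peak if \<open>x\<close> ends above height \<open>0\<close>,
  and otherwise in front of \<open>x @ y\<close> or behind it according as the step from \<open>x\<close> to \<open>y\<close>
  descends or ascends (in front of \<open>x\<close> if \<open>y\<close> is empty). This keeps the word ballot and the number of
  descents unchanged. It is undone by cutting at the letter \<open>1\<close> and, when \<open>1\<close> stands at an
  end, splitting the rest after its longest ballot prefix, respectively after its last return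
  to height \<open>0\<close>.
\<close>

section \<open>Heights and ballot words\<close>

definition rise :: "nat \<Rightarrow> nat \<Rightarrow> int" where
  "rise a b = (if a < b then 1 else if b < a then -1 else 0)"

lemma rise_simps [simp]:
  "a < b \<Longrightarrow> rise a b = 1" "b < a \<Longrightarrow> rise a b = -1"
  by (simp_all add: rise_def)

lemma rise_ge: "-1 \<le> rise a b"
  by (simp add: rise_def)

lemma card_adjacent_Cons_Cons:
  "card {t. Suc t < length (x # y # zs) \<and> R ((x # y # zs) ! t) ((x # y # zs) ! Suc t)} =
   (if R x y then 1 else 0) + card {t. Suc t < length (y # zs) \<and> R ((y # zs) ! t) ((y # zs) ! Suc t)}"
  (is "card ?T = _ + card ?S")
proof -
  have "?T = (if R x y then {0} else {}) \<union> Suc ` ?S"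
  proof (rule set_eqI)
    show "t \<in> ?T \<longleftrightarrow> t \<in> (if R x y then {0} else {}) \<union> Suc ` ?S" for t
      by (cases t) (auto simp: image_iff)
  qed
  moreover have "finite ?S"
    by (rule finite_subset[of _ "{..<length (y # zs)}"]) auto
  ultimately show ?thesis
    by (simp add: card_image)
qed

lemma descents_simps [simp]:
  "descents [] = 0" "descents [x] = 0"
  "descents (x # y # zs) = (if y < x then 1 else 0) + descents (y # zs)"
  unfolding descents_def
  by (simp_all only: card_adjacent_Cons_Cons[where R = "\<lambda>a b. b < a"]) simp_all

lemma height_simps [simp]:
  "height [] = 0" "height [x] = 0"
  "height (x # y # zs) = rise x y + height (y # zs)"
  unfolding height_def ascents_def descents_def
  by (simp_all only: card_adjacent_Cons_Cons[where R = "(<)"]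
      card_adjacent_Cons_Cons[where R = "\<lambda>a b. b < a"]) (simp_all add: rise_def)

definition ballot_from :: "int \<Rightarrow> nat list \<Rightarrow> bool" where
  "ballot_from c w \<longleftrightarrow> (\<forall>t\<in>{1..length w}. 0 \<le> c + height (take t w))"

lemma ballot_iff_ballot_from: "ballot w \<longleftrightarrow> ballot_from 0 w"
  by (simp add: ballot_def ballot_from_def)

lemma ballot_from_simps [simp]:
  "ballot_from c []"
  "ballot_from c [x] \<longleftrightarrow> 0 \<le> c"
  "ballot_from c (x # y # zs) \<longleftrightarrow> 0 \<le> c \<and> ballot_from (c + rise x y) (y # zs)"
proof -
  have ball: "(\<forall>t\<in>{1..Suc k}. P t) \<longleftrightarrow> P 1 \<and> (\<forall>t\<in>{1..k}. P (Suc t))" for k and P :: "nat \<Rightarrow> bool"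
  proof -
    have "{1..Suc k} = insert 1 (Suc ` {1..k})"
      by (auto simp: image_iff)
    then show ?thesis
      by (simp del: image_Suc_atLeastAtMost)
  qed
  have "height (take (Suc t) (x # y # zs)) = rise x y + height (take t (y # zs))" if "1 \<le> t" for t
    using that by (cases t) auto
  then show "ballot_from c (x # y # zs) \<longleftrightarrow> 0 \<le> c \<and> ballot_from (c + rise x y) (y # zs)"
    unfolding ballot_from_def length_Cons[of x] ball by (auto simp: add.assoc)
qed (auto simp: ballot_from_def)

lemma ballot_from_Cons:
  "w \<noteq> [] \<Longrightarrow> ballot_from c (x # w) \<longleftrightarrow> 0 \<le> c \<and> ballot_from (c + rise x (hd w)) w"
  by (cases w) auto

lemma descents_Cons: "w \<noteq> [] \<Longrightarrow> descents (x # w) = (if hd w < x then 1 else 0) + descents w"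
  by (cases w) auto

lemma ballot_from_height: "ballot_from c w \<Longrightarrow> w \<noteq> [] \<Longrightarrow> 0 \<le> c + height w"
  unfolding ballot_from_def by (metis One_nat_def atLeastAtMost_iff length_greater_0_conv
      less_eq_Suc_le order_refl take_all)

lemma ballot_from_mono: "ballot_from c w \<Longrightarrow> c \<le> c' \<Longrightarrow> ballot_from c' w"
  unfolding ballot_from_def by force

lemma ballot_from_nonneg: "ballot_from c w \<Longrightarrow> w \<noteq> [] \<Longrightarrow> 0 \<le> c"
  by (induction w rule: induct_list012) auto

lemma ballot_from_prefix: "ballot_from c (xs @ ys) \<Longrightarrow> ballot_from c xs"
proof (unfold ballot_from_def, intro ballI)
  fix t
  assume all: "\<forall>t\<in>{1..length (xs @ ys)}. 0 \<le> c + height (take t (xs @ ys))"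
    and t: "t \<in> {1..length xs}"
  show "0 \<le> c + height (take t xs)"
    using bspec[OF all, of t] t by simp
qed

lemma height_append:
  "xs \<noteq> [] \<Longrightarrow> ys \<noteq> [] \<Longrightarrow> height (xs @ ys) = height xs + rise (last xs) (hd ys) + height ys"
  by (induction xs rule: induct_list012) (auto simp: neq_Nil_conv)

lemma descents_append:
  "xs \<noteq> [] \<Longrightarrow> ys \<noteq> [] \<Longrightarrow>
   descents (xs @ ys) = descents xs + (if hd ys < last xs then 1 else 0) + descents ys"
  by (induction xs rule: induct_list012) (auto simp: neq_Nil_conv)

lemma ballot_from_append:
  "xs \<noteq> [] \<Longrightarrow> ys \<noteq> [] \<Longrightarrow>
   ballot_from c (xs @ ys) \<longleftrightarrow> ballot_from c xs \<and> ballot_from (c + height xs + rise (last xs) (hd ys)) ys"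
proof (induction xs arbitrary: c rule: induct_list012)
  case (2 x)
  then show ?case by (auto simp: neq_Nil_conv)
next
  case (3 x y zs)
  then show ?case by (auto simp: add.assoc)
qed simp

lemma rise_map: "strict_mono_on S f \<Longrightarrow> a \<in> S \<Longrightarrow> b \<in> S \<Longrightarrow> rise (f a) (f b) = rise a b"
  by (simp add: rise_def strict_mono_on_less)

lemma height_map: "strict_mono_on S f \<Longrightarrow> set w \<subseteq> S \<Longrightarrow> height (map f w) = height w"
  by (induction w rule: induct_list012) (auto simp: rise_map)

lemma descents_map: "strict_mono_on S f \<Longrightarrow> set w \<subseteq> S \<Longrightarrow> descents (map f w) = descents w"
  by (induction w rule: induct_list012) (auto simp: strict_mono_on_less)

lemma ballot_from_map:
  assumes "strict_mono_on S f" "set w \<subseteq> S"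
  shows "ballot_from c (map f w) \<longleftrightarrow> ballot_from c w"
proof -
  have "height (take t (map f w)) = height (take t w)" for t
    using height_map[OF assms(1), of "take t w"] assms(2) set_take_subset[of t w]
    by (simp add: take_map)
  then show ?thesis
    by (simp add: ballot_from_def)
qed

lemma
  assumes "x \<noteq> []" "last x < m" "y \<noteq> [] \<Longrightarrow> hd y < m"
  shows ballot_peak_iff: "ballot (x @ m # y) \<longleftrightarrow> ballot x \<and> (y \<noteq> [] \<longrightarrow> ballot_from (height x) y)"
    and descents_peak: "descents (x @ m # y) = descents x + (if y = [] then 0 else Suc (descents y))"
proof -
  have "ballot (x @ m # y) \<longleftrightarrow> ballot x \<and> ballot_from (height x + 1) (m # y)"
    using ballot_from_append[OF assms(1), of "m # y" 0] assms(2)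
    by (simp add: ballot_iff_ballot_from)
  then show "ballot (x @ m # y) \<longleftrightarrow> ballot x \<and> (y \<noteq> [] \<longrightarrow> ballot_from (height x) y)"
    using ballot_from_height[of 0 x] assms by (cases y) (auto simp: ballot_iff_ballot_from)
  show "descents (x @ m # y) = descents x + (if y = [] then 0 else Suc (descents y))"
    using descents_append[OF assms(1), of "m # y"] assms by (cases y) auto
qed

lemma ballot_peakD:
  assumes "x \<noteq> []" "\<forall>z\<in>set (x @ y). z < m" "ballot (x @ m # y)"
  shows "ballot x" "0 \<le> height x" "y \<noteq> [] \<Longrightarrow> ballot_from (height x) y"
proof -
  have "last x < m" "y \<noteq> [] \<Longrightarrow> hd y < m"
    using assms(1,2) by auto
  then show "ballot x" and "y \<noteq> [] \<Longrightarrow> ballot_from (height x) y"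
    using assms(3) ballot_peak_iff[OF assms(1)] by auto
  then show "0 \<le> height x"
    using ballot_from_height assms(1) by (fastforce simp: ballot_iff_ballot_from)
qed

lemma
  assumes "strict_mono_on S f" "set (x @ y) \<subseteq> S" "x \<noteq> []"
    and "last x < m" "y \<noteq> [] \<Longrightarrow> hd y < m" "f (last x) < m'" "y \<noteq> [] \<Longrightarrow> f (hd y) < m'"
  shows ballot_peak_map: "ballot (map f x @ m' # map f y) \<longleftrightarrow> ballot (x @ m # y)"
    and descents_peak_map: "descents (map f x @ m' # map f y) = descents (x @ m # y)"
proof -
  have map_x: "map f x \<noteq> []" "last (map f x) < m'" and map_y: "map f y \<noteq> [] \<Longrightarrow> hd (map f y) < m'"
    using assms(3,6,7) by (auto simp: last_map hd_map)
  show "ballot (map f x @ m' # map f y) \<longleftrightarrow> ballot (x @ m # y)"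
    using ballot_peak_iff[OF map_x map_y] ballot_peak_iff[OF assms(3-5)] assms(1,2)
    by (simp add: ballot_iff_ballot_from ballot_from_map height_map)
  show "descents (map f x @ m' # map f y) = descents (x @ m # y)"
    using descents_peak[OF map_x map_y] descents_peak[OF assms(3-5)] assms(1,2)
    by (simp add: descents_map)
qed

lemma has_factor3_iff_sublist: "has_factor3 w a b c \<longleftrightarrow> sublist [a, b, c] w"
proof
  assume "has_factor3 w a b c"
  then obtain t where t: "Suc (Suc t) < length w" "w ! t = a" "w ! Suc t = b" "w ! Suc (Suc t) = c"
    unfolding has_factor3_def by blast
  then have "w = take t w @ [a, b, c] @ drop (Suc (Suc (Suc t))) w"
    by (metis Cons_nth_drop_Suc Suc_lessD append_Cons append_Nil append_take_drop_id)
  then show "sublist [a, b, c] w"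
    by (metis sublist_appendI)
next
  assume "sublist [a, b, c] w"
  then obtain ps ss where "w = ps @ [a, b, c] @ ss"
    unfolding sublist_def by blast
  then show "has_factor3 w a b c"
    unfolding has_factor3_def by (intro exI[of _ "length ps"]) (auto simp: nth_append)
qed

lemma sublist_append_letter_iff:
  "v \<notin> set zs \<Longrightarrow> sublist zs (xs @ v # ys) \<longleftrightarrow> sublist zs xs \<or> sublist zs ys"
  using sublist_append[of zs xs "v # ys"] sublist_Cons_right[of zs v ys]
  by (auto simp: prefix_Cons)

lemma sublist_interior:
  assumes "sublist [p, q, r] w" "distinct w"
  shows "hd w \<noteq> q" "last w \<noteq> q"
proof -
  obtain ps ss where w: "w = ps @ p # q # r # ss"
    using assms(1) unfolding sublist_def by auto
  show "hd w \<noteq> q"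
    using assms(2) unfolding w by (cases ps) auto
  show "last w \<noteq> q"
    using assms(2) unfolding w by (cases ss rule: rev_cases) auto
qed

lemma sublist_sides_interior:
  assumes "distinct (a @ b)" "sublist [p, q, r] a \<or> sublist [p, q, r] b"
  shows "a \<noteq> [] \<Longrightarrow> last a \<noteq> q" "b \<noteq> [] \<Longrightarrow> hd b \<noteq> q"
  using assms sublist_interior[of p q r a] sublist_interior[of p q r b]
    set_mono_sublist[of "[p, q, r]" a] set_mono_sublist[of "[p, q, r]" b]
  by (auto dest: last_in_set hd_in_set)

lemma sublist_peak_split:
  assumes "sublist [p, q, r] (x @ y)" "p < q" "r < q"
    and "ballot x" "height x = 0" "hd y < last x \<or> ballot y"
  shows "sublist [p, q, r] x \<or> sublist [p, q, r] y"
proof -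
  have "False" if x: "x = xs @ [p]" and y: "y = q # r # ys" for xs ys
    using assms(2,3,6) unfolding x y by (auto simp: ballot_iff_ballot_from dest: ballot_from_nonneg)
  moreover have "False" if x: "x = (xs @ [p]) @ [q]" for xs
  proof -
    have "ballot_from 0 (xs @ [p])"
      using assms(4) ballot_from_prefix unfolding x ballot_iff_ballot_from by blast
    then have "0 \<le> height (xs @ [p])"
      using ballot_from_height by fastforce
    moreover have "height x = height (xs @ [p]) + 1"
      using height_append[of "xs @ [p]" "[q]"] assms(2) unfolding x by simp
    ultimately show False
      using assms(5) by simp
  qed
  ultimately show ?thesis
    using assms(1) unfolding sublist_append[of "[p, q, r]" x y]
    by (force simp: suffix_def prefix_def Cons_eq_append_conv)
qed

definition ballot_prefix_length :: "nat list \<Rightarrow> nat" where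
  "ballot_prefix_length w = (GREATEST k. k \<le> length w \<and> ballot (take k w))"

definition last_return :: "nat list \<Rightarrow> nat" where
  "last_return w = (GREATEST k. 0 < k \<and> k \<le> length w \<and> height (take k w) = 0)"

lemma ballot_prefix_length_split:
  assumes "ballot_from 1 e" "e \<noteq> []"
  defines "k \<equiv> ballot_prefix_length e"
  shows "0 < k" "ballot (take k e)"
    "drop k e \<noteq> [] \<Longrightarrow> height (take k e) = 0 \<and> hd (drop k e) < last (take k e) \<and> ballot (drop k e)"
proof -
  let ?P = "\<lambda>k. k \<le> length e \<and> ballot (take k e)"
  have P1: "?P 1"
    using assms(2) by (cases e) (auto simp: ballot_iff_ballot_from)
  have bounded: "?P j \<Longrightarrow> j \<le> length e" for j
    by simp
  have Pk: "?P k" and k_greatest: "?P j \<Longrightarrow> j \<le> k" for j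
    unfolding k_def ballot_prefix_length_def
    using GreatestI_nat[of ?P, OF P1 bounded] Greatest_le_nat[of ?P, OF _ bounded] by blast+
  show "0 < k"
    using k_greatest[OF P1] by simp
  then have x: "take k e \<noteq> []"
    using assms(2) by simp
  show "ballot (take k e)"
    using Pk by simp
  assume y: "drop k e \<noteq> []"
  then have "take (Suc k) e = take k e @ [hd (drop k e)]"
    by (simp add: hd_drop_conv_nth take_Suc_conv_app_nth)
  moreover have "\<not> ?P (Suc k)"
    using k_greatest[of "Suc k"] by auto
  ultimately have "height (take k e) + rise (last (take k e)) (hd (drop k e)) < 0"
    using Pk y x by (simp add: ballot_iff_ballot_from ballot_from_append)
  moreover have "0 \<le> height (take k e)"
    using Pk x ballot_from_height by (fastforce simp: ballot_iff_ballot_from)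
  ultimately have h0: "height (take k e) = 0" and down: "rise (last (take k e)) (hd (drop k e)) = -1"
    using rise_ge[of "last (take k e)" "hd (drop k e)"] by linarith+
  have "ballot_from 0 (drop k e)"
    using assms(1) ballot_from_append[OF x y, of 1] h0 down by simp
  then show "height (take k e) = 0 \<and> hd (drop k e) < last (take k e) \<and> ballot (drop k e)"
    using h0 down by (auto simp: ballot_iff_ballot_from rise_def split: if_splits)
qed

lemma last_return_split:
  assumes "ballot c" "0 < height c"
  defines "k \<equiv> last_return c"
  shows "0 < k" "k < length c" "height (take k c) = 0"
    "last (take k c) < hd (drop k c)" "ballot (drop k c)"
proof -
  let ?P = "\<lambda>k. 0 < k \<and> k \<le> length c \<and> height (take k c) = 0"
  have P1: "?P 1"
    using assms(2) by (cases c) auto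
  have bounded: "?P j \<Longrightarrow> j \<le> length c" for j
    by simp
  have Pk: "?P k" and k_greatest: "?P j \<Longrightarrow> j \<le> k" for j
    unfolding k_def last_return_def
    using GreatestI_nat[of ?P, OF P1 bounded] Greatest_le_nat[of ?P, OF _ bounded] by blast+
  then show "0 < k" "height (take k c) = 0"
    by simp_all
  show "k < length c"
    using Pk assms(2) by (cases "k = length c") auto
  then have x: "take k c \<noteq> []" and y: "drop k c \<noteq> []"
    using Pk by auto
  have positive: "0 < rise (last (take k c)) (hd (drop k c)) + height (take t (drop k c))"
    if "t \<in> {1..length (drop k c)}" for t
  proof -
    have "take (k + t) c = take k c @ take t (drop k c)"
      by (simp add: take_add)
    then have "height (take (k + t) c) =
        rise (last (take k c)) (hd (drop k c)) + height (take t (drop k c))"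
      using height_append[OF x, of "take t (drop k c)"] that Pk y by auto
    moreover have "0 \<le> height (take (k + t) c)"
      using assms(1) that by (auto simp: ballot_def)
    moreover have "height (take (k + t) c) \<noteq> 0"
      using k_greatest[of "k + t"] that by fastforce
    ultimately show ?thesis
      by linarith
  qed
  from positive[of 1] y show up: "last (take k c) < hd (drop k c)"
    by (cases "drop k c") (auto simp: rise_def split: if_splits)
  show "ballot (drop k c)"
    using positive up unfolding ballot_def by fastforce
qed

lemma ballot_prefix_length_append:
  assumes "x \<noteq> []" "ballot x" "y \<noteq> [] \<Longrightarrow> height x = 0 \<and> hd y < last x"
  shows "ballot_prefix_length (x @ y) = length x"
  unfolding ballot_prefix_length_def
proof (rule Greatest_equality)
  show "length x \<le> length (x @ y) \<and> ballot (take (length x) (x @ y))"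
    using assms(2) by simp
  fix k
  assume k: "k \<le> length (x @ y) \<and> ballot (take k (x @ y))"
  show "k \<le> length x"
  proof (rule ccontr)
    assume "\<not> k \<le> length x"
    then obtain a ys j where y: "y = a # ys" and "take k (x @ y) = (x @ [a]) @ take j ys"
      using k by (cases y; cases "k - length x") auto
    then have "ballot_from 0 (x @ [a])"
      using k ballot_from_prefix by (metis ballot_iff_ballot_from)
    then show False
      using assms y by (simp add: ballot_from_append)
  qed
qed

lemma last_return_append:
  assumes "x \<noteq> []" "height x = 0" "y \<noteq> []" "last x < hd y" "ballot y"
  shows "last_return (x @ y) = length x"
  unfolding last_return_def
proof (rule Greatest_equality)
  show "0 < length x \<and> length x \<le> length (x @ y) \<and> height (take (length x) (x @ y)) = 0"
    using assms(1,2) by simp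
  fix k
  assume k: "0 < k \<and> k \<le> length (x @ y) \<and> height (take k (x @ y)) = 0"
  show "k \<le> length x"
  proof (rule ccontr)
    assume "\<not> k \<le> length x"
    then have t: "k - length x \<in> {1..length y}" and "take k (x @ y) = x @ take (k - length x) y"
      using k by auto
    then have "height (take k (x @ y)) = 1 + height (take (k - length x) y)"
      using assms height_append[OF assms(1), of "take (k - length x) y"] by (auto simp: hd_take)
    moreover have "0 \<le> height (take (k - length x) y)"
      using assms(5) t by (simp add: ballot_def)
    ultimately show False
      using k by simp
  qed
qed

section \<open>Inserting and removing a valley\<close>

definition insert_valley :: "nat \<Rightarrow> nat list \<Rightarrow> nat list \<Rightarrow> nat list" where
  "insert_valley v x y =
     (if y = [] then v # x
      else if 0 < height x then x @ v # y
      else if hd y < last x then v # x @ y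
      else x @ y @ [v])"

definition split_letter :: "nat \<Rightarrow> nat list \<Rightarrow> nat list \<times> nat list" where
  "split_letter v s = (takeWhile (\<lambda>z. z \<noteq> v) s, tl (dropWhile (\<lambda>z. z \<noteq> v) s))"

definition remove_valley :: "nat \<Rightarrow> nat list \<Rightarrow> nat list \<times> nat list" where
  "remove_valley v s =
     (case split_letter v s of (c, e) \<Rightarrow>
        if c = [] then (take (ballot_prefix_length e) e, drop (ballot_prefix_length e) e)
        else if e = [] then (take (last_return c) c, drop (last_return c) c)
        else (c, e))"

lemma split_letter_append: "v \<notin> set c \<Longrightarrow> split_letter v (c @ v # e) = (c, e)"
  by (simp add: split_letter_def takeWhile_append dropWhile_append)

lemma set_insert_valley: "set (insert_valley v x y) = insert v (set (x @ y))"
  by (auto simp: insert_valley_def)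

lemma distinct_insert_valley: "distinct (insert_valley v x y) \<longleftrightarrow> distinct (v # x @ y)"
  by (auto simp: insert_valley_def)

lemma sublist_insert_valley: "sublist x (insert_valley v x y)" "sublist y (insert_valley v x y)"
  unfolding insert_valley_def by (auto simp: sublist_append sublist_Cons_right)

lemma insert_valley_ballot_descents:
  assumes x: "x \<noteq> []" and dist: "distinct (x @ y)"
    and bounds: "\<forall>z\<in>set (x @ y). v < z \<and> z < m" and peak: "ballot (x @ m # y)"
  shows "ballot (insert_valley v x y) \<and> descents (insert_valley v x y) = descents (x @ m # y)"
proof -
  have vx: "v < hd x" "v < last x" "last x < m"
    using bounds x by auto
  have vy: "v < hd y" "hd y < m" "v < last y" if "y \<noteq> []"
    using bounds that by auto
  have "\<forall>z\<in>set (x @ y). z < m"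
    using bounds by auto
  note ballot_x = ballot_peakD(1)[OF x this peak, unfolded ballot_iff_ballot_from]
    and hx = ballot_peakD(2)[OF x this peak] and ballot_y = ballot_peakD(3)[OF x this peak]
  have des: "descents (x @ m # y) = descents x + (if y = [] then 0 else Suc (descents y))"
    using descents_peak[OF x vx(3) vy(2)] .
  have "hd y \<noteq> last x" if "y \<noteq> []"
    using dist x that by (metis disjoint_iff distinct_append hd_in_set last_in_set)
  then consider (front) "y = []" | (middle) "y \<noteq> []" "0 < height x"
    | (down) "y \<noteq> []" "height x = 0" "hd y < last x"
    | (up) "y \<noteq> []" "height x = 0" "last x < hd y"
    using hx by (cases "y = []"; cases "0 < height x") (auto simp: neq_iff)
  then show ?thesis
  proof cases
    case front
    then show ?thesis
      using x vx ballot_x des ballot_from_mono[OF ballot_x, of 1]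
      by (simp add: insert_valley_def ballot_iff_ballot_from ballot_from_Cons descents_Cons)
  next
    case middle
    then show ?thesis
      using x vx vy ballot_x ballot_y des
      by (simp add: insert_valley_def ballot_iff_ballot_from ballot_from_append descents_append
          ballot_from_Cons descents_Cons)
  next
    case down
    then show ?thesis
      using x vx vy ballot_y des ballot_from_mono[OF ballot_x, of 1]
      by (simp add: insert_valley_def ballot_iff_ballot_from ballot_from_append descents_append
          ballot_from_Cons descents_Cons)
  next
    case up
    then show ?thesis
      using x vx vy ballot_x ballot_y des ballot_from_height[of 0 y]
      by (simp add: insert_valley_def ballot_iff_ballot_from ballot_from_append descents_append
          ballot_from_mono[of 0 y 1])
  qed
qed

lemma remove_valley_insert_valley:
  assumes x: "x \<noteq> []" and dist: "distinct (x @ y)"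
    and bounds: "\<forall>z\<in>set (x @ y). v < z \<and> z < m" and peak: "ballot (x @ m # y)"
  shows "remove_valley v (insert_valley v x y) = (x, y)"
proof -
  have v: "v \<notin> set x" "v \<notin> set y"
    using bounds by auto
  have "\<forall>z\<in>set (x @ y). z < m"
    using bounds by auto
  note ballot_x = ballot_peakD(1)[OF x this peak]
    and hx = ballot_peakD(2)[OF x this peak] and ballot_y = ballot_peakD(3)[OF x this peak]
  have "hd y \<noteq> last x" if "y \<noteq> []"
    using dist x that by (metis disjoint_iff distinct_append hd_in_set last_in_set)
  then consider (front) "y = []" | (middle) "y \<noteq> []" "0 < height x"
    | (down) "y \<noteq> []" "height x = 0" "hd y < last x"
    | (up) "y \<noteq> []" "height x = 0" "last x < hd y"
    using hx by (cases "y = []"; cases "0 < height x") (auto simp: neq_iff)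
  then show ?thesis
  proof cases
    case front
    then show ?thesis
      using split_letter_append[of v "[]" x] ballot_prefix_length_append[OF x ballot_x, of "[]"]
      by (simp add: insert_valley_def remove_valley_def)
  next
    case middle
    then show ?thesis
      using x v split_letter_append[of v x y] by (simp add: insert_valley_def remove_valley_def)
  next
    case down
    then show ?thesis
      using v split_letter_append[of v "[]" "x @ y"] ballot_prefix_length_append[OF x ballot_x, of y]
      by (simp add: insert_valley_def remove_valley_def)
  next
    case up
    then show ?thesis
      using x v split_letter_append[of v "x @ y" "[]"] ballot_y last_return_append[OF x _ _ _, of y]
      by (simp add: insert_valley_def remove_valley_def ballot_iff_ballot_from)
  qed
qed

lemma insert_valley_remove_valley:
  assumes s: "ballot (c @ v # e)" "c @ e \<noteq> []" and bounds: "\<forall>z\<in>set (c @ e). v < z \<and> z < m"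
    and xy: "remove_valley v (c @ v # e) = (x, y)"
  shows "x \<noteq> [] \<and> x @ y = c @ e \<and> ballot (x @ m # y) \<and> insert_valley v x y = c @ v # e"
proof -
  have "v \<notin> set c"
    using bounds by auto
  then have xy_def: "(x, y) =
     (if c = [] then (take (ballot_prefix_length e) e, drop (ballot_prefix_length e) e)
      else if e = [] then (take (last_return c) c, drop (last_return c) c)
      else (c, e))"
    using xy by (simp add: remove_valley_def split_letter_append)
  have sides: "x \<noteq> [] \<and> x @ y = c @ e \<and> ballot x \<and> (y \<noteq> [] \<longrightarrow> ballot_from (height x) y)
      \<and> insert_valley v x y = c @ v # e"
  proof (cases "c = []")
    case True
    with s bounds have "e \<noteq> []" "ballot_from 1 e"
      by (auto simp: ballot_iff_ballot_from ballot_from_Cons)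
    moreover have "x = take (ballot_prefix_length e) e" "y = drop (ballot_prefix_length e) e"
      using True xy_def by simp_all
    ultimately show ?thesis
      using True ballot_prefix_length_split[of e]
      by (auto simp: insert_valley_def ballot_iff_ballot_from)
  next
    case c: False
    then have ballot_c: "ballot c" and "ballot_from (height c + rise (last c) v) (v # e)"
      using s by (simp_all add: ballot_iff_ballot_from ballot_from_append)
    moreover have "rise (last c) v = -1"
      using bounds c by auto
    ultimately have height_c: "0 < height c" and ballot_e: "e \<noteq> [] \<Longrightarrow> ballot_from (height c) e"
      using bounds by (auto simp: ballot_from_Cons dest: ballot_from_nonneg)
    show ?thesis
    proof (cases "e = []")
      case True
      then have "x = take (last_return c) c" "y = drop (last_return c) c"
        using c xy_def by simp_all
      then show ?thesis
        using True last_return_split[OF ballot_c height_c] ballot_c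
          ballot_from_prefix[of 0 "take (last_return c) c" "drop (last_return c) c"]
        by (auto simp: insert_valley_def ballot_iff_ballot_from)
    next
      case False
      then have "x = c" "y = e"
        using c xy_def by simp_all
      then show ?thesis
        using c False ballot_c height_c ballot_e by (simp add: insert_valley_def)
    qed
  qed
  moreover have "last x < m" "y \<noteq> [] \<Longrightarrow> hd y < m"
    using sides bounds by (metis Un_iff last_in_set hd_in_set set_append)+
  ultimately show ?thesis
    using ballot_peak_iff by blast
qed

lemma sublist_insert_valley_iff:
  assumes x: "x \<noteq> []" and bounds: "\<forall>z\<in>set (x @ y). z < m" and peak: "ballot (x @ m # y)"
    and pqr: "v \<notin> set [p, q, r]" "p < q" "r < q"
  shows "sublist [p, q, r] (insert_valley v x y) \<longleftrightarrow> sublist [p, q, r] x \<or> sublist [p, q, r] y"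
proof
  assume "sublist [p, q, r] x \<or> sublist [p, q, r] y"
  then show "sublist [p, q, r] (insert_valley v x y)"
    using sublist_insert_valley sublist_order.order_trans by blast
next
  assume sub: "sublist [p, q, r] (insert_valley v x y)"
  note ballot_x = ballot_peakD(1)[OF x bounds peak]
    and hx = ballot_peakD(2)[OF x bounds peak] and ballot_y = ballot_peakD(3)[OF x bounds peak]
  have sub_xy: "sublist [p, q, r] x \<or> sublist [p, q, r] y" if "sublist [p, q, r] (x @ y)"
    "height x = 0" "hd y < last x \<or> ballot y"
    using sublist_peak_split[OF that(1) pqr(2,3) ballot_x that(2,3)] .
  consider (front) "y = []" | (middle) "y \<noteq> []" "0 < height x"
    | (down) "y \<noteq> []" "height x = 0" "hd y < last x"
    | (up) "y \<noteq> []" "height x = 0" "\<not> hd y < last x"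
    using hx by fastforce
  then show "sublist [p, q, r] x \<or> sublist [p, q, r] y"
  proof cases
    case front
    then show ?thesis
      using sub sublist_append_letter_iff[OF pqr(1), of "[]" x] by (simp add: insert_valley_def)
  next
    case middle
    then show ?thesis
      using sub sublist_append_letter_iff[OF pqr(1), of x y] by (simp add: insert_valley_def)
  next
    case down
    then have "sublist [p, q, r] (x @ y)"
      using sub sublist_append_letter_iff[OF pqr(1), of "[]" "x @ y"] by (simp add: insert_valley_def)
    then show ?thesis
      using sub_xy down by blast
  next
    case up
    then have "sublist [p, q, r] (x @ y)"
      using sub sublist_append_letter_iff[OF pqr(1), of "x @ y" "[]"] by (simp add: insert_valley_def)
    moreover have "ballot y"
      using up ballot_y by (simp add: ballot_iff_ballot_from)
    ultimately show ?thesis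
      using sub_xy up by blast
  qed
qed

lemma is_perm_split_iff:
  "v \<in> {1..n} \<Longrightarrow> is_perm n (c @ v # e) \<longleftrightarrow> distinct (c @ e) \<and> set (c @ e) = {1..n} - {v}"
  unfolding is_perm_def by auto

lemma is_perm_split:
  assumes "is_perm n s" "v \<in> {1..n}"
  obtains c e where "s = c @ v # e" "distinct (c @ e)" "set (c @ e) = {1..n} - {v}"
  using assms is_perm_split_iff split_list by (metis is_perm_def)

definition shift_down :: "nat \<Rightarrow> nat \<Rightarrow> nat" where
  "shift_down n z = (if z = n then n else z - 1)"

definition shift_up :: "nat \<Rightarrow> nat \<Rightarrow> nat" where
  "shift_up n z = (if z = n then n else z + 1)"

lemma shift_up_down: "z \<in> {2..n} \<Longrightarrow> shift_up n (shift_down n z) = z"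
  by (auto simp: shift_up_def shift_down_def)

lemma shift_down_up: "z \<in> {1..n} - {n - 1} \<Longrightarrow> shift_down n (shift_up n z) = z"
  by (auto simp: shift_up_def shift_down_def)

lemma map_shift_up_down: "set xs \<subseteq> {2..n} \<Longrightarrow> map (shift_up n) (map (shift_down n) xs) = xs"
  by (induction xs) (auto simp: shift_up_down)

lemma map_shift_down_up: "set xs \<subseteq> {1..n} - {n - 1} \<Longrightarrow> map (shift_down n) (map (shift_up n) xs) = xs"
  by (induction xs) (auto simp: shift_down_up)

lemma bij_betw_shift_down: "2 \<le> n \<Longrightarrow> bij_betw (shift_down n) {2..n} ({1..n} - {n - 1})"
  by (rule bij_betw_byWitness[where f' = "shift_up n"])
    (auto simp: shift_up_down shift_down_up, auto simp: shift_up_def shift_down_def split: if_splits)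

lemma bij_betw_shift_up: "2 \<le> n \<Longrightarrow> bij_betw (shift_up n) ({1..n} - {n - 1}) {2..n}"
  by (rule bij_betw_byWitness[where f' = "shift_down n"])
    (auto simp: shift_up_down shift_down_up, auto simp: shift_up_def shift_down_def split: if_splits)

lemma strict_mono_on_shift_down: "strict_mono_on {2..n} (shift_down n)"
  by (rule strict_mono_onI) (auto simp: shift_down_def)

lemma strict_mono_on_shift_up: "strict_mono_on ({1..n} - {n - 1}) (shift_up n)"
  by (rule strict_mono_onI) (auto simp: shift_up_def)

section \<open>The two bijections\<close>

text \<open>The peak letter is written \<open>Suc n\<close> rather than \<open>n - 1\<close> so that it exceeds every letter
  of \<open>x @ y\<close>; only its being larger than its neighbours matters for ballot words and descents.\<close>

definition peak_sides :: "nat \<Rightarrow> int \<Rightarrow> nat \<Rightarrow> nat \<Rightarrow> (nat list \<times> nat list) set" where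
  "peak_sides n d i j =
     {(x, y). x \<noteq> [] \<and> distinct (x @ y) \<and> set (x @ y) = {2..n} \<and>
        ballot (x @ Suc n # y) \<and> int (descents (x @ Suc n # y)) = d \<and>
        (sublist [i + 1, n, j + 1] x \<or> sublist [i + 1, n, j + 1] y)}"

definition insert_peak :: "nat \<Rightarrow> nat list \<Rightarrow> nat list \<Rightarrow> nat list" where
  "insert_peak n x y = map (shift_down n) x @ (n - 1) # map (shift_down n) y"

definition remove_peak :: "nat \<Rightarrow> nat list \<Rightarrow> nat list \<times> nat list" where
  "remove_peak n w = map_prod (map (shift_up n)) (map (shift_up n)) (split_letter (n - 1) w)"

lemma insert_peak_in_ballot_perms:
  assumes xy: "(x, y) \<in> peak_sides n d i j" and ij: "i \<in> {1..n - 2}" "j \<in> {1..n - 2}"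
  shows "insert_peak n x y \<in> {w \<in> ballot_perms n d. has_factor3 w i n j}"
proof -
  let ?f = "shift_down n"
  have n: "3 \<le> n"
    using ij by auto
  have x: "x \<noteq> []" and dist: "distinct (x @ y)" and set_xy: "set (x @ y) = {2..n}"
    and ballot_xy: "ballot (x @ Suc n # y)" and des_xy: "int (descents (x @ Suc n # y)) = d"
    and fac: "sublist [i + 1, n, j + 1] x \<or> sublist [i + 1, n, j + 1] y"
    using xy unfolding peak_sides_def by auto
  have "bij_betw ?f {2..n} ({1..n} - {n - 1})"
    using bij_betw_shift_down n by simp
  then have "distinct (map ?f (x @ y)) \<and> set (map ?f (x @ y)) = {1..n} - {n - 1}"
    using dist unfolding bij_betw_def distinct_map list.set_map set_xy by blast
  then have perm: "is_perm n (insert_peak n x y)"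
    using n by (simp add: insert_peak_def is_perm_split_iff)
  have "last x \<in> {2..n}" "y \<noteq> [] \<Longrightarrow> hd y \<in> {2..n}"
    unfolding set_xy[symmetric] using x by simp_all
  with sublist_sides_interior[OF dist fac] x have neighbours: "last x < Suc n" "y \<noteq> [] \<Longrightarrow> hd y < Suc n"
    "?f (last x) < n - 1" "y \<noteq> [] \<Longrightarrow> ?f (hd y) < n - 1"
    by (auto simp: shift_down_def)
  have "map ?f [i + 1, n, j + 1] = [i, n, j]"
    using ij by (auto simp: shift_down_def)
  then have "sublist [i, n, j] (map ?f x) \<or> sublist [i, n, j] (map ?f y)"
    using fac map_mono_sublist by metis
  moreover have "n - 1 \<notin> set [i, n, j]"
    using ij by auto
  ultimately have factor: "sublist [i, n, j] (insert_peak n x y)"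
    using sublist_append_letter_iff[of "n - 1" "[i, n, j]" "map ?f x" "map ?f y"]
    by (simp add: insert_peak_def)
  show ?thesis
    using perm factor ballot_xy des_xy
      ballot_peak_map[OF strict_mono_on_shift_down equalityD1[OF set_xy] x neighbours]
      descents_peak_map[OF strict_mono_on_shift_down equalityD1[OF set_xy] x neighbours]
    by (simp add: insert_peak_def ballot_perms_def has_factor3_iff_sublist)
qed

lemma remove_peak_insert_peak:
  assumes "(x, y) \<in> peak_sides n d i j"
  shows "remove_peak n (insert_peak n x y) = (x, y)"
proof -
  have "set (x @ y) = {2..n}"
    using assms by (simp add: peak_sides_def)
  then have "n - 1 \<notin> set (map (shift_down n) x)" "set x \<subseteq> {2..n}" "set y \<subseteq> {2..n}"
    by (auto simp: shift_down_def)
  then show ?thesis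
    using map_shift_up_down[of x n] map_shift_up_down[of y n]
    by (simp add: insert_peak_def remove_peak_def split_letter_append)
qed

lemma shift_up_sides_in_peak_sides:
  assumes w: "a @ (n - 1) # b \<in> {w \<in> ballot_perms n d. has_factor3 w i n j}"
    and ij: "i \<in> {1..n - 2}" "j \<in> {1..n - 2}"
  shows "(map (shift_up n) a, map (shift_up n) b) \<in> peak_sides n d i j"
proof -
  let ?f = "shift_up n"
  have n: "3 \<le> n"
    using ij by auto
  have perm: "is_perm n (a @ (n - 1) # b)" and ballot_w: "ballot (a @ (n - 1) # b)"
    and des_w: "int (descents (a @ (n - 1) # b)) = d" and sub: "sublist [i, n, j] (a @ (n - 1) # b)"
    using w by (auto simp: ballot_perms_def has_factor3_iff_sublist)
  have "n - 1 \<in> {1..n}" "n - 1 \<notin> set [i, n, j]"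
    using n ij by auto
  then have dist: "distinct (a @ b)" and set_ab: "set (a @ b) = {1..n} - {n - 1}"
    and fac: "sublist [i, n, j] a \<or> sublist [i, n, j] b"
    using perm is_perm_split_iff[of "n - 1" n a b] sub sublist_append_letter_iff[of "n - 1" "[i, n, j]" a b]
    by simp_all
  note interior = sublist_sides_interior[OF dist fac]
  have hd_b: "hd b < n - 1" if "b \<noteq> []"
  proof -
    have "hd b \<in> {1..n} - {n - 1}"
      unfolding set_ab[symmetric] using that by simp
    then show ?thesis
      using interior(2)[OF that] by auto
  qed
  have a: "a \<noteq> []"
  proof
    assume a: "a = []"
    have "n \<in> set (a @ b)"
      unfolding set_ab using n by simp
    then have b: "b \<noteq> []"
      using a by auto
    then have "ballot_from (-1) b"
      using ballot_w a hd_b by (simp add: ballot_iff_ballot_from ballot_from_Cons)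
    then show False
      using b ballot_from_nonneg by fastforce
  qed
  have last_a: "last a < n - 1"
  proof -
    have "last a \<in> {1..n} - {n - 1}"
      unfolding set_ab[symmetric] using a by simp
    then show ?thesis
      using interior(1)[OF a] by auto
  qed
  have "?f (last a) < Suc n" "b \<noteq> [] \<Longrightarrow> ?f (hd b) < Suc n"
    using last_a hd_b by (auto simp: shift_up_def)
  note peak_map = ballot_peak_map[OF strict_mono_on_shift_up equalityD1[OF set_ab] a last_a hd_b this]
    descents_peak_map[OF strict_mono_on_shift_up equalityD1[OF set_ab] a last_a hd_b this]
  have "bij_betw ?f ({1..n} - {n - 1}) {2..n}"
    using bij_betw_shift_up n by simp
  then have "distinct (map ?f (a @ b)) \<and> set (map ?f (a @ b)) = {2..n}"
    using dist unfolding bij_betw_def distinct_map list.set_map set_ab by blast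
  moreover have "map ?f [i, n, j] = [i + 1, n, j + 1]"
    using ij by (auto simp: shift_up_def)
  then have "sublist [i + 1, n, j + 1] (map ?f a) \<or> sublist [i + 1, n, j + 1] (map ?f b)"
    using fac map_mono_sublist by metis
  ultimately show ?thesis
    using a peak_map ballot_w des_w by (simp add: peak_sides_def)
qed

lemma remove_peak_in_peak_sides:
  assumes w: "w \<in> {w \<in> ballot_perms n d. has_factor3 w i n j}"
    and ij: "i \<in> {1..n - 2}" "j \<in> {1..n - 2}"
  shows "remove_peak n w \<in> peak_sides n d i j \<and> case_prod (insert_peak n) (remove_peak n w) = w"
proof -
  have "is_perm n w" "n - 1 \<in> {1..n}"
    using w ij by (auto simp: ballot_perms_def)
  then obtain a b where w_ab: "w = a @ (n - 1) # b" and set_ab: "set (a @ b) = {1..n} - {n - 1}"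
    by (rule is_perm_split)
  have "set a \<subseteq> set (a @ b)" "set b \<subseteq> set (a @ b)"
    by auto
  then have subs: "set a \<subseteq> {1..n} - {n - 1}" "set b \<subseteq> {1..n} - {n - 1}"
    unfolding set_ab .
  then have "n - 1 \<notin> set a"
    by blast
  then have remove: "remove_peak n w = (map (shift_up n) a, map (shift_up n) b)"
    using w_ab by (simp add: remove_peak_def split_letter_append)
  show ?thesis
    using shift_up_sides_in_peak_sides[OF _ ij] w w_ab remove map_shift_down_up[OF subs(1)]
      map_shift_down_up[OF subs(2)]
    by (simp add: insert_peak_def)
qed

lemma insert_valley_in_ballot_perms:
  assumes xy: "(x, y) \<in> peak_sides n d i j"
  shows "insert_valley 1 x y \<in> {w \<in> ballot_perms n d. has_factor3 w (i + 1) n (j + 1)}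
    \<and> remove_valley 1 (insert_valley 1 x y) = (x, y)"
proof -
  have x: "x \<noteq> []" and dist: "distinct (x @ y)" and set_xy: "set (x @ y) = {2..n}"
    and ballot_xy: "ballot (x @ Suc n # y)" and des_xy: "int (descents (x @ Suc n # y)) = d"
    and fac: "sublist [i + 1, n, j + 1] x \<or> sublist [i + 1, n, j + 1] y"
    using xy unfolding peak_sides_def by auto
  have bounds: "\<forall>z\<in>set (x @ y). 1 < z \<and> z < Suc n"
    using set_xy by auto
  have "hd x \<in> {2..n}"
    unfolding set_xy[symmetric] using x by simp
  then have "insert 1 (set (x @ y)) = {1..n}"
    unfolding set_xy by auto
  then have "is_perm n (insert_valley 1 x y)"
    using dist set_xy by (simp add: is_perm_def set_insert_valley distinct_insert_valley)
  moreover have "sublist [i + 1, n, j + 1] (insert_valley 1 x y)"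
    using fac sublist_insert_valley sublist_order.order_trans by blast
  ultimately show ?thesis
    using insert_valley_ballot_descents[OF x dist bounds ballot_xy] des_xy
      remove_valley_insert_valley[OF x dist bounds ballot_xy]
    by (simp add: ballot_perms_def has_factor3_iff_sublist)
qed

lemma remove_valley_in_peak_sides:
  assumes s: "s \<in> {w \<in> ballot_perms n d. has_factor3 w (i + 1) n (j + 1)}"
    and ij: "i \<in> {1..n - 2}" "j \<in> {1..n - 2}"
  shows "remove_valley 1 s \<in> peak_sides n d i j \<and> case_prod (insert_valley 1) (remove_valley 1 s) = s"
proof -
  have n: "3 \<le> n"
    using ij by auto
  have perm: "is_perm n s" and ballot_s: "ballot s" and des_s: "int (descents s) = d"
    and fac: "sublist [i + 1, n, j + 1] s"
    using s by (auto simp: ballot_perms_def has_factor3_iff_sublist)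
  have "1 \<in> {1..n}"
    using n by simp
  then obtain c e where s_ce: "s = c @ 1 # e" and dist: "distinct (c @ e)"
    and "set (c @ e) = {1..n} - {1}"
    using is_perm_split[OF perm] by blast
  then have set_ce: "set (c @ e) = {2..n}"
    by auto
  then have bounds: "\<forall>z\<in>set (c @ e). 1 < z \<and> z < Suc n" and "c @ e \<noteq> []"
    using n by auto
  obtain x y where xy: "remove_valley 1 s = (x, y)"
    by fastforce
  have "ballot (c @ 1 # e)"
    using ballot_s s_ce by simp
  then have x: "x \<noteq> []" and xy_ce: "x @ y = c @ e" and ballot_xy: "ballot (x @ Suc n # y)"
    and s_xy: "insert_valley 1 x y = s"
    using insert_valley_remove_valley[OF _ \<open>c @ e \<noteq> []\<close> bounds] xy s_ce by blast+
  have dist_xy: "distinct (x @ y)" and set_xy: "set (x @ y) = {2..n}"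
    and bounds_xy: "\<forall>z\<in>set (x @ y). 1 < z \<and> z < Suc n"
    using dist set_ce bounds xy_ce by simp_all
  have "descents s = descents (x @ Suc n # y)"
    using insert_valley_ballot_descents[OF x dist_xy bounds_xy ballot_xy] s_xy by simp
  moreover have "1 \<notin> set [i + 1, n, j + 1]" "i + 1 < n" "j + 1 < n"
    using ij by auto
  then have "sublist [i + 1, n, j + 1] x \<or> sublist [i + 1, n, j + 1] y"
    using sublist_insert_valley_iff[OF x _ ballot_xy] bounds_xy s_xy fac by blast
  ultimately show ?thesis
    using xy x set_xy ballot_xy des_s s_xy dist_xy by (simp add: peak_sides_def)
qed

lemma bij_betw_insert_peak:
  assumes "i \<in> {1..n - 2}" "j \<in> {1..n - 2}"
  shows "bij_betw (case_prod (insert_peak n)) (peak_sides n d i j)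
    {w \<in> ballot_perms n d. has_factor3 w i n j}"
  by (rule bij_betw_byWitness[where f' = "remove_peak n"])
    (use insert_peak_in_ballot_perms[OF _ assms] remove_peak_insert_peak
      remove_peak_in_peak_sides[OF _ assms] in auto)

lemma bij_betw_insert_valley:
  assumes "i \<in> {1..n - 2}" "j \<in> {1..n - 2}"
  shows "bij_betw (case_prod (insert_valley 1)) (peak_sides n d i j)
    {w \<in> ballot_perms n d. has_factor3 w (i + 1) n (j + 1)}"
  by (rule bij_betw_byWitness[where f' = "remove_valley 1"])
    (use insert_valley_in_ballot_perms remove_valley_in_peak_sides[OF _ assms] in auto)

theorem theorem3p1:
  fixes n :: nat and d :: int
  assumes "n \<ge> 2"
  shows "\<forall>i\<in>{1..n-2}. \<forall>j\<in>{1..n-2}. b_count n d (i+1) (j+1) = b_count n d i j"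
proof (intro ballI)
  fix i j
  assume ij: "i \<in> {1..n-2}" "j \<in> {1..n-2}"
  show "b_count n d (i+1) (j+1) = b_count n d i j"
    using bij_betw_same_card[OF bij_betw_insert_peak[OF ij]]
      bij_betw_same_card[OF bij_betw_insert_valley[OF ij]]
    by (simp add: b_count_def)
qed

end
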